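(* Let $1<g\in\mathbb{N}$ and let $\mathbf{X}=\bigcup_{i\ge1}X_i$ be a $g$-discrete self-similar fractal. For every $i\in\mathbb{Z}^+$, if $P_{\mathbf{X}}(i)$ holds then $P_{\mathbf{X}}(i+1)$ holds, where $P_{\mathbf{X}}(s)$ is the property: "the full grid graph of $X_s$ is a tree and $nhb_{X_s}=nvb_{X_s}=1$".
   Context: For $g\in\mathbb{N}$ write $\mathbb{N}_g=\{0,\dots,g-1\}$; for $A,B\subseteq\mathbb{N}^2$ and $k\in\mathbb{N}$, $A+kB=\{\vec m+k\vec n : \vec m\in A,\vec n\in B\}$. Let $1<g\in\mathbb{N}$. A set $\mathbf{X}\subset\mathbb{N}^2$ is a $g$-discrete self-similar fractal if there is a set $G$ with $\{(0,0)\}\subsetneq G\subsetneq\mathbb{N}_g^2$ having at least one point in every row and every column of $\mathbb{N}_g^2$ such that $\mathbf{X}=\bigcup_{i\ge1}X_i$, where $X_1=G$ and $X_{i+1}=X_i+g^iG$ ($X_i$ is the $i$-th stage). The full grid graph of $V\subseteq\mathbb{Z}^2$ has vertex set $V$ and an edge between $\vec x,\vec y$ iff $\|\vec x-\vec y\|=1$; a tree means this graph is connected and acyclic. For a finite $S\subseteq\mathbb{Z}^2$ let $l_S=\min_{(x,y)\in S}x$, $r_S=\max_{(x,y)\in S}x$, $b_S=\min_{(x,y)\in S}y$, $t_S=\max_{(x,y)\in S}y$. An h-bridge of $S$ is a subset of $S$ of the form $\{(l_S,y),(r_S,y)\}$; a v-bridge is a subset of $S$ of the form $\{(x,b_S),(x,t_S)\}$;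 $nhb_S$, $nvb_S$ denote their numbers. *)

theory Defs
  imports Main
begin

type_synonym pt = "int \<times> int"

definition Ng :: "nat \<Rightarrow> int set" where
  "Ng g = {0..<int g}"

definition msum :: "pt set \<Rightarrow> int \<Rightarrow> pt set \<Rightarrow> pt set" where
  "msum A k B = {(fst m + k * fst n, snd m + k * snd n) | m n. m \<in> A \<and> n \<in> B}"

definition fractal_generator :: "nat \<Rightarrow> pt set \<Rightarrow> bool" where
  "fractal_generator g G \<longleftrightarrow>
     {(0,0)} \<subset> G \<and> G \<subset> Ng g \<times> Ng g \<and>
     (\<forall>y\<in>Ng g. \<exists>x. (x, y) \<in> G) \<and>
     (\<forall>x\<in>Ng g. \<exists>y. (x, y) \<in> G)"

(* stage G g i = X_i; convention X_0 = {(0,0)} so that X_1 = X_0 + g^0 G = G *)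
primrec stage :: "pt set \<Rightarrow> nat \<Rightarrow> nat \<Rightarrow> pt set" where
  "stage G g 0 = {(0,0)}"
| "stage G g (Suc i) = msum (stage G g i) (int g ^ i) G"

definition grid_adj :: "pt \<Rightarrow> pt \<Rightarrow> bool" where
  "grid_adj p q \<longleftrightarrow> (fst p - fst q)^2 + (snd p - snd q)^2 = 1"

definition grid_edges :: "pt set \<Rightarrow> (pt \<times> pt) set" where
  "grid_edges V = {(p, q). p \<in> V \<and> q \<in> V \<and> grid_adj p q}"

definition grid_connected :: "pt set \<Rightarrow> bool" where
  "grid_connected V \<longleftrightarrow> (\<forall>u\<in>V. \<forall>v\<in>V. (u, v) \<in> (grid_edges V)\<^sup>*)"

definition grid_cycle :: "pt set \<Rightarrow> pt list \<Rightarrow> bool" where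
  "grid_cycle V cs \<longleftrightarrow> length cs \<ge> 3 \<and> distinct cs \<and> set cs \<subseteq> V \<and>
     (\<forall>i. Suc i < length cs \<longrightarrow> grid_adj (cs ! i) (cs ! Suc i)) \<and>
     grid_adj (last cs) (hd cs)"

definition grid_acyclic :: "pt set \<Rightarrow> bool" where
  "grid_acyclic V \<longleftrightarrow> \<not> (\<exists>cs. grid_cycle V cs)"

definition grid_tree :: "pt set \<Rightarrow> bool" where
  "grid_tree V \<longleftrightarrow> grid_connected V \<and> grid_acyclic V"

definition lS :: "pt set \<Rightarrow> int" where "lS S = Min (fst ` S)"
definition rS :: "pt set \<Rightarrow> int" where "rS S = Max (fst ` S)"
definition bS :: "pt set \<Rightarrow> int" where "bS S = Min (snd ` S)"
definition tS :: "pt set \<Rightarrow> int" where "tS S = Max (snd ` S)"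

definition hbridges :: "pt set \<Rightarrow> pt set set" where
  "hbridges S = {B. B \<subseteq> S \<and> (\<exists>y. B = {(lS S, y), (rS S, y)})}"
definition vbridges :: "pt set \<Rightarrow> pt set set" where
  "vbridges S = {B. B \<subseteq> S \<and> (\<exists>x. B = {(x, bS S), (x, tS S)})}"

definition nhb :: "pt set \<Rightarrow> nat" where "nhb S = card (hbridges S)"
definition nvb :: "pt set \<Rightarrow> nat" where "nvb S = card (vbridges S)"

definition P_prop :: "pt set \<Rightarrow> bool" where
  "P_prop S \<longleftrightarrow> grid_tree S \<and> nhb S = 1 \<and> nvb S = 1"

end

theory Submission
  imports Defs "HOL-Library.Transitive_Closure_Table"
begin

text \<open>
  Write X(i+1) = X(i) + k G with k = g^i: the points of X(i+1) fall into the k-by-k blocks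
  indexed by G, each block holding a translate of X(i). A grid edge between two blocks must
  join the two ends of an h-bridge or a v-bridge of X(i); so when X(i) has exactly one bridge
  of each kind, adjacent blocks are joined by exactly one edge and the grid graph of X(i+1)
  is a tree of copies of X(i) glued along the tree G. Bridge counts multiply under the
  construction. Finally G inherits the hypotheses from X(i) = X(i-1) + g^(i-1) G: it is
  connected as the block projection of X(i), acyclic as a subset of X(i), and has one bridge
  of each kind because the bridge counts of X(i) are products.
\<close>

section \<open>Grid adjacency and blocks\<close>

lemma sum_squares_eq_1_int:
  "(a::int)^2 + b^2 = 1 \<longleftrightarrow> (\<bar>a\<bar> = 1 \<and> b = 0) \<or> (a = 0 \<and> \<bar>b\<bar> = 1)"
proof
  assume h: "a^2 + b^2 = 1"
  have "a^2 \<le> 1" "b^2 \<le> 1" using h zero_le_power2[of a] zero_le_power2[of b] by linarith+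
  then have "\<bar>a\<bar> \<le> 1" "\<bar>b\<bar> \<le> 1" by (simp_all add: abs_square_le_1)
  then have "a \<in> {-1, 0, 1}" "b \<in> {-1, 0, 1}" by auto
  then show "(\<bar>a\<bar> = 1 \<and> b = 0) \<or> (a = 0 \<and> \<bar>b\<bar> = 1)" using h by auto
qed (auto simp: abs_square_eq_1[symmetric])

lemma grid_adj_iff:
  "grid_adj p q \<longleftrightarrow>
     (\<bar>fst q - fst p\<bar> = 1 \<and> snd q = snd p) \<or> (fst q = fst p \<and> \<bar>snd q - snd p\<bar> = 1)"
  unfolding grid_adj_def sum_squares_eq_1_int by (auto simp: abs_minus_commute)

lemma grid_adj_sym: "grid_adj p q \<Longrightarrow> grid_adj q p"
  unfolding grid_adj_def by (simp add: power2_commute)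

lemma grid_adj_irrefl: "grid_adj p q \<Longrightarrow> p \<noteq> q"
  unfolding grid_adj_def by auto

lemma div_mod_eqI:
  fixes k r x :: int
  assumes "0 \<le> r" "r < k" "x = r + k * d"
  shows "x div k = d" "x mod k = r"
  using assms by simp_all

lemma div_mod_step:
  fixes x x' k :: int
  assumes "0 < k" "\<bar>x' - x\<bar> \<le> 1"
  shows "x' div k = x div k \<and> x' mod k - x mod k = x' - x \<or>
         x' div k - x div k = x' - x \<and> x' mod k - x mod k = (1 - k) * (x' - x)"
proof -
  have succ: "(y + 1) div k = y div k \<and> (y + 1) mod k = y mod k + 1 \<or>
              (y + 1) div k = y div k + 1 \<and> y mod k = k - 1 \<and> (y + 1) mod k = 0" for y
  proof (cases "y mod k + 1 < k")
    case True
    have "y + 1 = (y mod k + 1) + k * (y div k)" by simp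
    from div_mod_eqI[OF _ True this] show ?thesis using assms(1) by simp
  next
    case False
    then have last: "y mod k = k - 1" using pos_mod_bound[OF assms(1), of y] by linarith
    have "y + 1 = 0 + k * (y div k + 1)"
      using last minus_mod_eq_mult_div[of y k] by (simp add: distrib_left)
    from div_mod_eqI[OF _ assms(1) this] show ?thesis using last by simp
  qed
  have "x' - x \<in> {-1, 0, 1}" using assms(2) by auto
  then consider "x' = x" | "x' = x + 1" | "x = x' + 1" by force
  then show ?thesis
  proof cases
    case 2 then show ?thesis using succ[of x] by (auto simp: algebra_simps)
  next
    case 3 then show ?thesis using succ[of x'] by (auto simp: algebra_simps)
  qed simp
qed

definition block :: "int \<Rightarrow> pt \<Rightarrow> pt" where
  "block k p = (fst p div k, snd p div k)"

definition offset :: "int \<Rightarrow> pt \<Rightarrow> pt" where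
  "offset k p = (fst p mod k, snd p mod k)"

definition place :: "int \<Rightarrow> pt \<Rightarrow> pt \<Rightarrow> pt" where
  "place k c b = (fst b + k * fst c, snd b + k * snd c)"

definition box :: "int \<Rightarrow> pt set" where
  "box k = {0..<k} \<times> {0..<k}"

lemma place_block_offset [simp]: "place k (block k p) (offset k p) = p"
  unfolding place_def block_def offset_def by (simp add: mult.commute)

lemma block_place [simp]: "b \<in> box k \<Longrightarrow> block k (place k c b) = c"
  unfolding place_def block_def box_def by auto

lemma offset_place [simp]: "b \<in> box k \<Longrightarrow> offset k (place k c b) = b"
  unfolding place_def offset_def box_def by auto

lemma msum_eq_place_image: "msum B k C = (\<lambda>(b, c). place k c b) ` (B \<times> C)"
  unfolding msum_def place_def by force

lemma mem_msum_iff: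
  assumes "B \<subseteq> box k"
  shows "p \<in> msum B k C \<longleftrightarrow> offset k p \<in> B \<and> block k p \<in> C"
proof
  assume "p \<in> msum B k C"
  then obtain b c where "b \<in> B" "c \<in> C" "p = place k c b"
    unfolding msum_eq_place_image by auto
  with assms show "offset k p \<in> B \<and> block k p \<in> C" by auto
next
  assume "offset k p \<in> B \<and> block k p \<in> C"
  then have "place k (block k p) (offset k p) \<in> msum B k C"
    unfolding msum_eq_place_image by force
  then show "p \<in> msum B k C" by simp
qed

lemma place_in_msum: "b \<in> B \<Longrightarrow> c \<in> C \<Longrightarrow> place k c b \<in> msum B k C"
  unfolding msum_eq_place_image by force

lemma grid_adj_place_iff [simp]: "grid_adj (place k c b) (place k c b') \<longleftrightarrow> grid_adj b b'"
  unfolding grid_adj_def place_def by simp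

lemma grid_adj_same_block:
  assumes "block k p = block k q"
  shows "grid_adj p q \<longleftrightarrow> grid_adj (offset k p) (offset k q)"
  by (metis assms grid_adj_place_iff place_block_offset)

lemma grid_adj_crossing:
  assumes k: "0 < k" and pq: "grid_adj p q" and ne: "block k p \<noteq> block k q"
  shows "fst (block k q) - fst (block k p) = fst q - fst p"
    and "snd (block k q) - snd (block k p) = snd q - snd p"
    and "fst (offset k q) - fst (offset k p) = (1 - k) * (fst q - fst p)"
    and "snd (offset k q) - snd (offset k p) = (1 - k) * (snd q - snd p)"
  using div_mod_step[OF k, of "fst q" "fst p"] div_mod_step[OF k, of "snd q" "snd p"] pq ne
  unfolding grid_adj_iff block_def offset_def by (auto simp: prod_eq_iff)

lemma grid_adj_blocks:
  assumes "0 < k" "grid_adj p q" "block k p \<noteq> block k q"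
  shows "grid_adj (block k p) (block k q)"
  using grid_adj_crossing(1,2)[OF assms] assms(2) unfolding grid_adj_iff by linarith

lemma block_swap [simp]: "block k (prod.swap p) = prod.swap (block k p)"
  unfolding block_def by simp

lemma offset_swap [simp]: "offset k (prod.swap p) = prod.swap (offset k p)"
  unfolding offset_def by simp

lemma grid_adj_swap_iff [simp]: "grid_adj (prod.swap p) (prod.swap q) \<longleftrightarrow> grid_adj p q"
  unfolding grid_adj_def by (simp add: add.commute)

lemma swap_subset_box_iff [simp]: "prod.swap ` B \<subseteq> box k \<longleftrightarrow> B \<subseteq> box k"
  unfolding box_def by auto

lemma swap_msum: "prod.swap ` msum B k C = msum (prod.swap ` B) k (prod.swap ` C)"
  unfolding msum_def by force

section \<open>Edges between blocks\<close>

text \<open>Bridges relative to the box of side k, indexed by their row (column); for sets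
  spanning the box they are the h-bridges (v-bridges) of the paper.\<close>

definition hbridge_rows :: "int \<Rightarrow> pt set \<Rightarrow> int set" where
  "hbridge_rows k S = {y. (0, y) \<in> S \<and> (k - 1, y) \<in> S}"

definition vbridge_cols :: "int \<Rightarrow> pt set \<Rightarrow> int set" where
  "vbridge_cols k S = {x. (x, 0) \<in> S \<and> (x, k - 1) \<in> S}"

lemma hbridge_rows_swap [simp]: "hbridge_rows k (prod.swap ` S) = vbridge_cols k S"
  unfolding hbridge_rows_def vbridge_cols_def by force

lemma vbridge_cols_swap [simp]: "vbridge_cols k (prod.swap ` S) = hbridge_rows k S"
  unfolding hbridge_rows_def vbridge_cols_def by force

lemma crossing_offsets:
  fixes r r' k d :: int
  assumes "0 \<le> r" "r < k" "0 \<le> r'" "r' < k" "r' - r = (1 - k) * d" "\<bar>d\<bar> = 1"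
  shows "d = 1 \<and> r = k - 1 \<and> r' = 0 \<or> d = -1 \<and> r = 0 \<and> r' = k - 1"
  using assms by (cases "d = 1") (auto simp: abs_if algebra_simps split: if_splits)

text \<open>Offsets of the ends of an edge between horizontally adjacent blocks are the two ends of
  an h-bridge of B, in an order fixed by the direction; so a unique bridge fixes the edge.\<close>

lemma horizontal_crossing_unique:
  assumes k: "0 < k" and B: "B \<subseteq> box k"
    and h_uniq: "\<forall>y\<in>hbridge_rows k B. \<forall>y'\<in>hbridge_rows k B. y = y'"
    and mem: "p \<in> msum B k C" "q \<in> msum B k C" "p' \<in> msum B k C" "q' \<in> msum B k C"
    and adj: "grid_adj p q" "grid_adj p' q'" and horizontal: "snd q = snd p"
    and blocks: "block k p = block k p'" "block k q = block k q'" "block k p \<noteq> block k q"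
  shows "p = p'"
proof -
  have ne': "block k p' \<noteq> block k q'" using blocks by simp
  note c = grid_adj_crossing[OF k adj(1) blocks(3)] and c' = grid_adj_crossing[OF k adj(2) ne']
  have inB: "offset k p \<in> B" "offset k q \<in> B" "offset k p' \<in> B" "offset k q' \<in> B"
    using mem mem_msum_iff[OF B] by auto
  have bounds: "0 \<le> fst x" "fst x < k" if "x \<in> B" for x
    using that B unfolding box_def by auto
  have same_step: "fst q' - fst p' = fst q - fst p" "snd q' - snd p' = snd q - snd p"
    using c(1,2) c'(1,2) blocks by simp_all
  have step: "\<bar>fst q - fst p\<bar> = 1" using adj(1) horizontal unfolding grid_adj_iff by auto
  obtain a b a' b' where o: "offset k p = (a, b)" "offset k p' = (a', b')"
    by (meson surj_pair)
  have "snd (offset k q) = b" "snd (offset k q') = b'"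
    using c(4) c'(4) horizontal same_step o by simp_all
  moreover note
    crossing_offsets[OF bounds[OF inB(1)] bounds[OF inB(2)] c(3) step]
    crossing_offsets[OF bounds[OF inB(3)] bounds[OF inB(4)] c'(3)]
  ultimately have "a = a'" "b \<in> hbridge_rows k B" "b' \<in> hbridge_rows k B"
    using inB same_step step o unfolding hbridge_rows_def by (auto; metis prod.collapse)+
  then have "offset k p = offset k p'" using h_uniq o by simp
  then show ?thesis using blocks(1) place_block_offset by metis
qed

lemma crossing_edge_unique:
  assumes k: "0 < k" and B: "B \<subseteq> box k"
    and h_uniq: "\<forall>y\<in>hbridge_rows k B. \<forall>y'\<in>hbridge_rows k B. y = y'"
    and v_uniq: "\<forall>x\<in>vbridge_cols k B. \<forall>x'\<in>vbridge_cols k B. x = x'"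
    and mem: "p \<in> msum B k C" "q \<in> msum B k C" "p' \<in> msum B k C" "q' \<in> msum B k C"
    and adj: "grid_adj p q" "grid_adj p' q'"
    and blocks: "block k p = block k p'" "block k q = block k q'" "block k p \<noteq> block k q"
  shows "p = p'"
proof (cases "snd q = snd p")
  case True
  from horizontal_crossing_unique[OF k B h_uniq mem adj True blocks] show ?thesis .
next
  case False
  then have "snd (prod.swap q) = snd (prod.swap p)" using adj(1) unfolding grid_adj_iff by auto
  moreover have sw: "prod.swap x \<in> msum (prod.swap ` B) k (prod.swap ` C)" if "x \<in> msum B k C" for x
    using that swap_msum by (metis image_eqI)
  ultimately have "prod.swap p = prod.swap p'"
    using horizontal_crossing_unique[OF k _ _ sw[OF mem(1)] sw[OF mem(2)] sw[OF mem(3)] sw[OF mem(4)]]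
      B v_uniq adj blocks by (simp add: inj_eq[OF inj_swap])
  then show ?thesis by (metis swap_swap)
qed

section \<open>Connectivity\<close>

lemma rtrancl_map:
  assumes "\<And>a b. (a, b) \<in> R \<Longrightarrow> (f a, f b) \<in> S\<^sup>*" and "(a, b) \<in> R\<^sup>*"
  shows "(f a, f b) \<in> S\<^sup>*"
  using assms(2)
proof (induction rule: rtrancl_induct)
  case (step b c)
  then show ?case using assms(1) rtrancl_trans by metis
qed simp

lemma adjacent_blocks_linked:
  assumes y: "y \<in> hbridge_rows k B" and x: "x \<in> vbridge_cols k B" and cd: "grid_adj c d"
  shows "\<exists>b\<in>B. \<exists>b'\<in>B. grid_adj (place k c b) (place k d b')"
proof -
  have h: "(0, y) \<in> B" "(k - 1, y) \<in> B" and v: "(x, 0) \<in> B" "(x, k - 1) \<in> B"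
    using x y unfolding hbridge_rows_def vbridge_cols_def by auto
  from cd consider "fst d = fst c + 1" "snd d = snd c" | "fst c = fst d + 1" "snd d = snd c"
    | "snd d = snd c + 1" "fst d = fst c" | "snd c = snd d + 1" "fst d = fst c"
    unfolding grid_adj_iff by linarith
  then show ?thesis
  proof cases
    case 1
    then have "grid_adj (place k c (k - 1, y)) (place k d (0, y))"
      unfolding grid_adj_iff place_def by (simp add: algebra_simps)
    then show ?thesis using h by blast
  next
    case 2
    then have "grid_adj (place k c (0, y)) (place k d (k - 1, y))"
      unfolding grid_adj_iff place_def by (simp add: algebra_simps)
    then show ?thesis using h by blast
  next
    case 3
    then have "grid_adj (place k c (x, k - 1)) (place k d (x, 0))"
      unfolding grid_adj_iff place_def by (simp add: algebra_simps)
    then show ?thesis using v by blast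
  next
    case 4
    then have "grid_adj (place k c (x, 0)) (place k d (x, k - 1))"
      unfolding grid_adj_iff place_def by (simp add: algebra_simps)
    then show ?thesis using v by blast
  qed
qed

lemma grid_connected_msum:
  assumes B: "B \<subseteq> box k" "grid_connected B"
    and y: "y \<in> hbridge_rows k B" and x: "x \<in> vbridge_cols k B"
    and C: "grid_connected C"
  shows "grid_connected (msum B k C)"
proof -
  let ?E = "grid_edges (msum B k C)"
  have within: "(place k c b, place k c b') \<in> ?E\<^sup>*" if "b \<in> B" "b' \<in> B" "c \<in> C" for b b' c
  proof -
    have "(place k c a, place k c a') \<in> ?E\<^sup>*" if "(a, a') \<in> grid_edges B" for a a'
    proof -
      have "(place k c a, place k c a') \<in> ?E"
        using that \<open>c \<in> C\<close> unfolding grid_edges_def by (simp add: place_in_msum)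
      then show ?thesis ..
    qed
    moreover have "(b, b') \<in> (grid_edges B)\<^sup>*"
      using B(2) that unfolding grid_connected_def by blast
    ultimately show ?thesis by (rule rtrancl_map)
  qed
  have linked: "\<forall>b\<in>B. \<forall>b'\<in>B. (place k c b, place k d b') \<in> ?E\<^sup>*"
    if "(c, d) \<in> (grid_edges C)\<^sup>*" "c \<in> C" for c d
    using that(1)
  proof induction
    case base
    show ?case using within that(2) by blast
  next
    case (step d e)
    then have "d \<in> C" "e \<in> C" "grid_adj d e" unfolding grid_edges_def by auto
    then obtain b0 b1 where b: "b0 \<in> B" "b1 \<in> B" "grid_adj (place k d b0) (place k e b1)"
      using adjacent_blocks_linked[OF y x] by blast
    then have edge: "(place k d b0, place k e b1) \<in> ?E"
      using \<open>d \<in> C\<close> \<open>e \<in> C\<close> unfolding grid_edges_def by (simp add: place_in_msum)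
    show ?case
    proof (intro ballI)
      fix b b' assume "b \<in> B" "b' \<in> B"
      have "(place k c b, place k d b0) \<in> ?E\<^sup>*" using step.IH \<open>b \<in> B\<close> b(1) by blast
      also have "(place k d b0, place k e b1) \<in> ?E\<^sup>*" using edge ..
      also have "(place k e b1, place k e b') \<in> ?E\<^sup>*"
        using within b(2) \<open>b' \<in> B\<close> \<open>e \<in> C\<close> by blast
      finally show "(place k c b, place k e b') \<in> ?E\<^sup>*" .
    qed
  qed
  show ?thesis
    unfolding grid_connected_def
  proof (intro ballI)
    fix p q assume "p \<in> msum B k C" "q \<in> msum B k C"
    then have "offset k p \<in> B" "block k p \<in> C" "offset k q \<in> B" "block k q \<in> C"
      using mem_msum_iff[OF B(1)] by auto
    then have "(place k (block k p) (offset k p), place k (block k q) (offset k q)) \<in> ?E\<^sup>*"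
      using linked C unfolding grid_connected_def by blast
    then show "(p, q) \<in> ?E\<^sup>*" by simp
  qed
qed

lemma grid_connected_msum_factor:
  assumes k: "0 < k" and B: "B \<subseteq> box k" "B \<noteq> {}"
    and A: "grid_connected (msum B k C)"
  shows "grid_connected C"
  unfolding grid_connected_def
proof (intro ballI)
  fix c d assume "c \<in> C" "d \<in> C"
  obtain b where b: "b \<in> B" using B(2) by blast
  have "(block k p, block k q) \<in> (grid_edges C)\<^sup>*" if "(p, q) \<in> grid_edges (msum B k C)" for p q
  proof -
    have "p \<in> msum B k C" "q \<in> msum B k C" and pq: "grid_adj p q"
      using that unfolding grid_edges_def by auto
    then have "block k p \<in> C" "block k q \<in> C" using mem_msum_iff[OF B(1)] by auto
    show ?thesis
    proof (cases "block k p = block k q")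
      case False
      with \<open>block k p \<in> C\<close> \<open>block k q \<in> C\<close> grid_adj_blocks[OF k pq False]
      have "(block k p, block k q) \<in> grid_edges C" unfolding grid_edges_def by simp
      then show ?thesis ..
    qed simp
  qed
  moreover have "(place k c b, place k d b) \<in> (grid_edges (msum B k C))\<^sup>*"
    using A place_in_msum b \<open>c \<in> C\<close> \<open>d \<in> C\<close> unfolding grid_connected_def by blast
  ultimately have "(block k (place k c b), block k (place k d b)) \<in> (grid_edges C)\<^sup>*"
    by (rule rtrancl_map)
  then show "(c, d) \<in> (grid_edges C)\<^sup>*" using b B(1) by auto
qed

section \<open>Acyclicity\<close>

lemma grid_acyclic_subset: "V \<subseteq> W \<Longrightarrow> grid_acyclic W \<Longrightarrow> grid_acyclic V"
  unfolding grid_acyclic_def grid_cycle_def by blast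

lemma grid_cycle_adj:
  assumes "grid_cycle V cs" "i < length cs"
  shows "grid_adj (cs ! i) (cs ! (Suc i mod length cs))"
proof (cases "Suc i < length cs")
  case False
  with assms have "Suc i = length cs" by simp
  then have "i = length cs - 1" "Suc i mod length cs = 0" "cs \<noteq> []" by auto
  then show ?thesis
    using assms(1) unfolding grid_cycle_def by (simp add: last_conv_nth hd_conv_nth)
qed (use assms in \<open>simp add: grid_cycle_def\<close>)

lemma cyclic_exit:
  fixes v :: "nat \<Rightarrow> 'a"
  assumes "a < n" "b < n" "v a \<in> S" "v b \<notin> S"
  shows "\<exists>t<n. v t \<in> S \<and> v (Suc t mod n) \<notin> S"
proof -
  define h where "h t \<longleftrightarrow> v ((a + t) mod n) \<notin> S" for t
  have "(a + (b + n - a) mod n) mod n = b"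
    using assms(1,2) by (simp add: mod_add_right_eq)
  then have "h ((b + n - a) mod n)" "\<not> h 0" using assms unfolding h_def by simp_all
  then obtain t where "\<not> h t" "h (Suc t)" using ex_least_nat_less by blast
  moreover have "(a + Suc t) mod n = Suc ((a + t) mod n) mod n" by (simp add: mod_Suc_eq)
  ultimately show ?thesis using assms(1) unfolding h_def by (metis mod_less_divisor order.strict_trans1 zero_le)
qed

lemma grid_acyclic_edge_separates:
  assumes acyclic: "grid_acyclic C" and c: "c1 \<in> C" "c2 \<in> C" "grid_adj c1 c2"
  shows "(c1, c2) \<notin> (grid_edges C - {(c1, c2), (c2, c1)})\<^sup>*"
proof
  define F where "F = grid_edges C - {(c1, c2), (c2, c1)}"
  define R where "R = (\<lambda>a b. (a, b) \<in> F)"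
  assume "(c1, c2) \<in> (grid_edges C - {(c1, c2), (c2, c1)})\<^sup>*"
  then have "(c1, c2) \<in> F\<^sup>*" unfolding F_def .
  then have "R\<^sup>*\<^sup>* c1 c2" unfolding R_def rtranclp_rtrancl_eq by simp
  then obtain xs where path: "rtrancl_path R c1 xs c2" and dist: "distinct (c1 # xs)"
    using rtranclp_eq_rtrancl_path rtrancl_path_distinct by metis
  have R_adj: "R a b \<Longrightarrow> b \<in> C \<and> grid_adj a b" for a b
    unfolding R_def F_def grid_edges_def by auto
  have "xs \<noteq> []"
  proof
    assume "xs = []"
    then have "c1 = c2" using path by (auto elim: rtrancl_path.cases)
    then show False using c(3) grid_adj_irrefl by blast
  qed
  then have last: "last xs = c2" using rtrancl_path_last[OF path] by blast
  have "length xs \<noteq> 1"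
  proof
    assume "length xs = 1"
    then have "xs = [c2]" using last by (cases xs) auto
    then have "R c1 c2" using path by (auto elim: rtrancl_path.cases)
    then show False unfolding R_def F_def by simp
  qed
  moreover have "0 < length xs" using \<open>xs \<noteq> []\<close> by simp
  ultimately have "3 \<le> length (c1 # xs)" by (simp del: length_greater_0_conv)
  moreover have "set xs \<subseteq> C" using rtrancl_path_Range[OF path] R_adj by blast
  moreover have "grid_adj ((c1 # xs) ! i) ((c1 # xs) ! Suc i)" if "Suc i < length (c1 # xs)" for i
    using rtrancl_path_nth[OF path, of i] R_adj that by simp
  ultimately have "grid_cycle C (c1 # xs)"
    unfolding grid_cycle_def using dist c last \<open>xs \<noteq> []\<close> by (simp add: grid_adj_sym)
  then show False using acyclic unfolding grid_acyclic_def by blast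
qed

lemma closed_walk_retraverses_edge:
  assumes acyclic: "grid_acyclic C" and walk: "\<forall>i<n. v i \<in> C"
    "\<forall>i<n. v i = v (Suc i mod n) \<or> grid_adj (v i) (v (Suc i mod n))"
    and j: "j < n" "v j \<noteq> v (Suc j mod n)"
  shows "\<exists>t<n. v t = v (Suc j mod n) \<and> v (Suc t mod n) = v j"
proof -
  \<comment> \<open>Deleting the edge separates its ends; the walk must re-enter the side of its start,
    and only the reversed edge does so.\<close>
  define c1 where "c1 = v j"
  define c2 where "c2 = v (Suc j mod n)"
  have c: "c1 \<in> C" "c2 \<in> C" "grid_adj c1 c2"
    using walk j unfolding c1_def c2_def by auto
  define F where "F = grid_edges C - {(c1, c2), (c2, c1)}"
  define S where "S = {c. (c1, c) \<in> F\<^sup>*}"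
  have "c1 \<in> S" "c2 \<notin> S"
    using grid_acyclic_edge_separates[OF acyclic c] unfolding S_def F_def by auto
  then obtain t where t: "t < n" "v t \<in> - S" "v (Suc t mod n) \<notin> - S"
    using cyclic_exit[of "Suc j mod n" n j v "- S"] j(1) unfolding c1_def c2_def by auto
  then have "(v (Suc t mod n), v t) \<in> grid_edges C"
    using walk grid_adj_sym unfolding grid_edges_def by fastforce
  moreover have "(v (Suc t mod n), v t) \<notin> F"
    using t unfolding S_def by (auto intro: rtrancl_into_rtrancl)
  ultimately show ?thesis
    using t \<open>c1 \<in> S\<close> unfolding F_def c1_def c2_def by auto
qed

lemma Suc_Suc_mod_neq:
  assumes "3 \<le> n" "j < n"
  shows "Suc (Suc j mod n) mod n \<noteq> j"
proof -
  have "Suc (Suc j mod n) mod n = (j + 2) mod n" by (simp add: mod_Suc_eq)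
  then show ?thesis using assms by (cases "j + 2 < n") (auto simp: le_mod_geq)
qed

lemma grid_cycle_offsets:
  assumes B: "B \<subseteq> box k" and cyc: "grid_cycle (msum B k C) cs"
    and one_block: "\<forall>p\<in>set cs. block k p = c"
  shows "grid_cycle B (map (offset k) cs)"
proof -
  have "inj_on (offset k) (set cs)"
    using one_block by (metis inj_onI place_block_offset)
  moreover have adj: "grid_adj (offset k p) (offset k q)"
    if "p \<in> set cs" "q \<in> set cs" "grid_adj p q" for p q
    using that one_block grid_adj_same_block by metis
  moreover have "offset k ` set cs \<subseteq> B"
    using cyc mem_msum_iff[OF B] unfolding grid_cycle_def by blast
  moreover have "cs \<noteq> []" using cyc unfolding grid_cycle_def by auto
  moreover have "grid_adj (offset k (last cs)) (offset k (hd cs))"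
    using adj cyc \<open>cs \<noteq> []\<close> unfolding grid_cycle_def by simp
  ultimately show ?thesis
    using cyc unfolding grid_cycle_def by (simp add: distinct_map last_map hd_map)
qed

lemma grid_acyclic_msum:
  assumes k: "0 < k" and B: "B \<subseteq> box k" "grid_acyclic B"
    and h_uniq: "\<forall>y\<in>hbridge_rows k B. \<forall>y'\<in>hbridge_rows k B. y = y'"
    and v_uniq: "\<forall>x\<in>vbridge_cols k B. \<forall>x'\<in>vbridge_cols k B. x = x'"
    and C: "grid_acyclic C"
  shows "grid_acyclic (msum B k C)"
  unfolding grid_acyclic_def
proof
  assume "\<exists>cs. grid_cycle (msum B k C) cs"
  then obtain cs where cyc: "grid_cycle (msum B k C) cs" by blast
  define n where "n = length cs"
  define nxt where "nxt i = Suc i mod n" for i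
  define v where "v i = block k (cs ! i)" for i
  have n: "3 \<le> n" and dist: "distinct cs" using cyc unfolding grid_cycle_def n_def by auto
  have nxt: "nxt i < n" for i using n unfolding nxt_def by simp
  have inA: "cs ! i \<in> msum B k C" if "i < n" for i
    using cyc that unfolding grid_cycle_def n_def by auto
  have adj: "grid_adj (cs ! i) (cs ! nxt i)" if "i < n" for i
    using grid_cycle_adj[OF cyc] that unfolding nxt_def n_def by simp
  have inC: "v i \<in> C" if "i < n" for i
    using inA[OF that] mem_msum_iff[OF B(1)] unfolding v_def by simp
  show False
  proof (cases "\<forall>i<n. v i = v 0")
    case True
    then have "\<forall>p\<in>set cs. block k p = v 0" unfolding v_def n_def by (metis in_set_conv_nth)
    then have "grid_cycle B (map (offset k) cs)" by (rule grid_cycle_offsets[OF B(1) cyc])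
    with B(2) show False unfolding grid_acyclic_def by blast
  next
    case False
    then obtain b where "b < n" "v b \<notin> {v 0}" by auto
    with n obtain j where j: "j < n" "v j \<noteq> v (nxt j)"
      using cyclic_exit[of 0 n b v "{v 0}"] unfolding nxt_def by auto
    have "\<forall>i<n. v i = v (nxt i) \<or> grid_adj (v i) (v (nxt i))"
      using grid_adj_blocks[OF k adj] unfolding v_def by blast
    then obtain t where t: "t < n" "v t = v (nxt j)" "v (nxt t) = v j"
      using closed_walk_retraverses_edge[OF C _ _ j(1) j(2)[unfolded nxt_def]] inC
      unfolding nxt_def by blast
    \<comment> \<open>Both crossings between the blocks v j and v (nxt j) are the same grid edge.\<close>
    note unique = crossing_edge_unique[OF k B(1) h_uniq v_uniq]
    have "cs ! t = cs ! nxt j"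
      by (rule unique[OF inA[OF t(1)] inA[OF nxt] inA[OF nxt] inA[OF j(1)] adj[OF t(1)]
            grid_adj_sym[OF adj[OF j(1)]]])
        (use t j(2) in \<open>simp_all add: v_def\<close>)
    moreover have "cs ! nxt t = cs ! j"
      by (rule unique[OF inA[OF nxt] inA[OF t(1)] inA[OF j(1)] inA[OF nxt]
            grid_adj_sym[OF adj[OF t(1)]] adj[OF j(1)]])
        (use t j(2) in \<open>simp_all add: v_def\<close>)
    ultimately have "t = nxt j" "nxt t = j"
      using dist nxt t(1) j(1) unfolding n_def by (simp_all add: nth_eq_iff_index_eq)
    then show False using Suc_Suc_mod_neq[OF n j(1)] unfolding nxt_def by simp
  qed
qed

section \<open>Counting bridges\<close>

definition spanning :: "int \<Rightarrow> pt set \<Rightarrow> bool" where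
  "spanning k S \<longleftrightarrow> fst ` S = {0..<k} \<and> snd ` S = {0..<k}"

lemma spanning_subset_box: "spanning k S \<Longrightarrow> S \<subseteq> box k"
  using subset_fst_snd[of S] unfolding spanning_def box_def by simp

lemma spanning_extent:
  assumes "0 < k" "spanning k S"
  shows "lS S = 0" "rS S = k - 1" "bS S = 0" "tS S = k - 1"
proof -
  have "Min {0..<k} = 0" "Max {0..<k} = k - 1"
    by (rule Min_eqI Max_eqI; use assms(1) in simp)+
  then show "lS S = 0" "rS S = k - 1" "bS S = 0" "tS S = k - 1"
    using assms(2) unfolding spanning_def lS_def rS_def bS_def tS_def by simp_all
qed

lemma nhb_eq_card_hbridge_rows:
  assumes "0 < k" "spanning k S"
  shows "nhb S = card (hbridge_rows k S)"
proof -
  have "hbridges S = (\<lambda>y. {(0, y), (k - 1, y)}) ` hbridge_rows k S"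
    unfolding hbridges_def hbridge_rows_def spanning_extent[OF assms] by blast
  moreover have "inj_on (\<lambda>y. {(0, y), (k - 1, y)}) (hbridge_rows k S)"
    by (rule inj_onI) (drule equalityD1, auto)
  ultimately show ?thesis unfolding nhb_def by (simp add: card_image)
qed

lemma nvb_eq_card_vbridge_cols:
  assumes "0 < k" "spanning k S"
  shows "nvb S = card (vbridge_cols k S)"
proof -
  have "vbridges S = (\<lambda>x. {(x, 0), (x, k - 1)}) ` vbridge_cols k S"
    unfolding vbridges_def vbridge_cols_def spanning_extent[OF assms] by blast
  moreover have "inj_on (\<lambda>x. {(x, 0), (x, k - 1)}) (vbridge_cols k S)"
    by (rule inj_onI) (drule equalityD1, auto)
  ultimately show ?thesis unfolding nvb_def by (simp add: card_image)
qed

lemma card_hbridge_rows_msum: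
  assumes k: "0 < k" and B: "B \<subseteq> box k"
  shows "card (hbridge_rows (k * m) (msum B k C)) = card (hbridge_rows k B) * card (hbridge_rows m C)"
proof -
  have last: "(k * m - 1) div k = m - 1" "(k * m - 1) mod k = k - 1"
    using div_mod_eqI[of "k - 1" k "k * m - 1" "m - 1"] k by (simp_all add: algebra_simps)
  have rows: "y \<in> hbridge_rows (k * m) (msum B k C) \<longleftrightarrow>
      y mod k \<in> hbridge_rows k B \<and> y div k \<in> hbridge_rows m C" for y
    using mem_msum_iff[OF B, of "(0, y)"] mem_msum_iff[OF B, of "(k * m - 1, y)"] last
    unfolding hbridge_rows_def offset_def block_def by auto
  have digits: "a mod k = a" "a div k = 0" if "a \<in> hbridge_rows k B" for a
    using that B unfolding hbridge_rows_def box_def by auto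
  have "bij_betw (\<lambda>y. (y mod k, y div k)) (hbridge_rows (k * m) (msum B k C))
          (hbridge_rows k B \<times> hbridge_rows m C)"
    by (rule bij_betw_byWitness[where f' = "\<lambda>(a, c). a + k * c"])
      (use k in \<open>auto simp: rows digits\<close>)
  then show ?thesis by (simp add: bij_betw_same_card card_cartesian_product)
qed

lemma card_vbridge_cols_msum:
  assumes "0 < k" "B \<subseteq> box k"
  shows "card (vbridge_cols (k * m) (msum B k C)) = card (vbridge_cols k B) * card (vbridge_cols m C)"
  using card_hbridge_rows_msum[of k "prod.swap ` B" m "prod.swap ` C"] assms
  by (simp add: swap_msum[symmetric])

lemma mixed_radix_image:
  fixes k m :: int
  assumes k: "0 < k"
  shows "(\<lambda>(a, c). a + k * c) ` ({0..<k} \<times> {0..<m}) = {0..<k * m}"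
proof (intro equalityI subsetI)
  fix x assume "x \<in> (\<lambda>(a, c). a + k * c) ` ({0..<k} \<times> {0..<m})"
  then obtain a c where x: "x = a + k * c" "0 \<le> a" "a < k" "0 \<le> c" "c \<le> m - 1" by auto
  then have "k * c \<le> k * (m - 1)" using k by (intro mult_left_mono) auto
  with x k show "x \<in> {0..<k * m}" by (simp add: algebra_simps)
next
  fix x assume x: "x \<in> {0..<k * m}"
  have split: "x = x mod k + k * (x div k)" by simp
  have "k * (x div k) < k * m"
    using x split pos_mod_sign[OF k, of x] unfolding atLeastLessThan_iff by linarith
  then have "x div k < m" using k by simp
  moreover have "0 \<le> x div k" using x k by (simp add: pos_imp_zdiv_nonneg_iff)
  ultimately have "(x mod k, x div k) \<in> {0..<k} \<times> {0..<m}" using k by simp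
  then show "x \<in> (\<lambda>(a, c). a + k * c) ` ({0..<k} \<times> {0..<m})"
    by (rule rev_image_eqI) simp
qed

lemma fst_image_msum: "fst ` msum B k C = (\<lambda>(a, c). a + k * c) ` (fst ` B \<times> fst ` C)"
  unfolding msum_def by force

lemma spanning_msum:
  assumes "0 < k" "spanning k B" "spanning m C"
  shows "spanning (k * m) (msum B k C)"
proof -
  have "fst ` msum B k C = {0..<k * m}"
    if "fst ` B = {0..<k}" "fst ` C = {0..<m}" for B C
    using that mixed_radix_image[OF assms(1)] by (simp add: fst_image_msum)
  from this[of B C] this[of "prod.swap ` B" "prod.swap ` C"] assms(2,3)
  show ?thesis unfolding spanning_def by (simp add: swap_msum[symmetric] image_image)
qed

section \<open>Stages of the fractal\<close>

lemma P_prop_msum: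
  assumes k: "0 < k" and m: "0 < m"
    and B: "spanning k B" "P_prop B" and C: "spanning m C" "P_prop C"
  shows "P_prop (msum B k C)"
proof -
  have box: "B \<subseteq> box k" using B(1) by (rule spanning_subset_box)
  have rows: "card (hbridge_rows k B) = 1" "card (vbridge_cols k B) = 1"
    "card (hbridge_rows m C) = 1" "card (vbridge_cols m C) = 1"
    using B C nhb_eq_card_hbridge_rows nvb_eq_card_vbridge_cols k m unfolding P_prop_def by simp_all
  then obtain y x where yx: "hbridge_rows k B = {y}" "vbridge_cols k B = {x}"
    by (metis One_nat_def card_1_singleton_iff)
  have trees: "grid_connected B" "grid_acyclic B" "grid_connected C" "grid_acyclic C"
    using B(2) C(2) unfolding P_prop_def grid_tree_def by auto
  have "grid_connected (msum B k C)"
    using grid_connected_msum[OF box trees(1) _ _ trees(3)] yx by simp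
  moreover have "grid_acyclic (msum B k C)"
    using grid_acyclic_msum[OF k box trees(2) _ _ trees(4)] yx by simp
  moreover have "spanning (k * m) (msum B k C)" "0 < k * m"
    using spanning_msum[OF k B(1) C(1)] k m by simp_all
  ultimately show ?thesis
    unfolding P_prop_def grid_tree_def
    by (simp add: nhb_eq_card_hbridge_rows nvb_eq_card_vbridge_cols
        card_hbridge_rows_msum[OF k box] card_vbridge_cols_msum[OF k box] rows)
qed

lemma P_prop_msum_factor:
  assumes k: "0 < k" and m: "0 < m" and B: "spanning k B"
    and C: "spanning m C" "grid_acyclic C" and A: "P_prop (msum B k C)"
  shows "P_prop C"
proof -
  have box: "B \<subseteq> box k" using B by (rule spanning_subset_box)
  have "B \<noteq> {}" using B k unfolding spanning_def by auto
  then have "grid_connected C"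
    using grid_connected_msum_factor[OF k box] A unfolding P_prop_def grid_tree_def by blast
  moreover have "spanning (k * m) (msum B k C)" "0 < k * m"
    using spanning_msum[OF k B C(1)] k m by simp_all
  then have "card (hbridge_rows k B) * card (hbridge_rows m C) = 1"
    "card (vbridge_cols k B) * card (vbridge_cols m C) = 1"
    using A unfolding P_prop_def
    by (simp_all add: nhb_eq_card_hbridge_rows nvb_eq_card_vbridge_cols
        card_hbridge_rows_msum[OF k box] card_vbridge_cols_msum[OF k box])
  ultimately show ?thesis
    using C m unfolding P_prop_def grid_tree_def
    by (simp add: nhb_eq_card_hbridge_rows nvb_eq_card_vbridge_cols)
qed

lemma spanning_generator:
  assumes "fractal_generator g G"
  shows "spanning (int g) G"
proof -
  have G: "G \<subseteq> {0..<int g} \<times> {0..<int g}"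
    and cols: "\<And>x. x \<in> {0..<int g} \<Longrightarrow> \<exists>y. (x, y) \<in> G"
    and rows: "\<And>y. y \<in> {0..<int g} \<Longrightarrow> \<exists>x. (x, y) \<in> G"
    using assms unfolding fractal_generator_def Ng_def by auto
  have "fst ` G = {0..<int g}"
  proof
    show "{0..<int g} \<subseteq> fst ` G" using cols by (metis fst_conv image_eqI subsetI)
  qed (use G in auto)
  moreover have "snd ` G = {0..<int g}"
  proof
    show "{0..<int g} \<subseteq> snd ` G" using rows by (metis snd_conv image_eqI subsetI)
  qed (use G in auto)
  ultimately show ?thesis unfolding spanning_def ..
qed

lemma spanning_stage:
  assumes "0 < g" "fractal_generator g G"
  shows "spanning (int g ^ n) (stage G g n)"
proof (induction n)
  case 0
  show ?case unfolding spanning_def by auto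
next
  case (Suc n)
  have "0 < int g ^ n" using assms(1) by simp
  from spanning_msum[OF this Suc spanning_generator[OF assms(2)]] show ?case
    by (simp add: mult.commute)
qed

lemma subset_msum: "(0, 0) \<in> C \<Longrightarrow> B \<subseteq> msum B k C"
  unfolding msum_def by force

lemma generator_subset_stage:
  assumes "(0, 0) \<in> G" "1 \<le> n"
  shows "G \<subseteq> stage G g n"
  using assms(2)
proof (induction n rule: dec_induct)
  case base
  show ?case unfolding One_nat_def stage.simps msum_def by force
next
  case (step n)
  then show ?case using subset_msum[OF assms(1)] by (simp, blast)
qed

theorem mainTheorem7:
  fixes g :: nat and G :: "(int \<times> int) set" and i :: nat
  assumes "1 < g"
    and "fractal_generator g G"
    and "1 \<le> i"
    and "P_prop (stage G g i)"
  shows "P_prop (stage G g (Suc i))"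
proof -
  obtain j where i: "i = Suc j" using assms(3) by (cases i) auto
  have g: "0 < g" "0 < int g" "0 < int g ^ j" using assms(1) by simp_all
  note spanning = spanning_stage[OF g(1) assms(2)] and G = spanning_generator[OF assms(2)]
  have "(0, 0) \<in> G" using assms(2) unfolding fractal_generator_def by auto
  then have "grid_acyclic G"
    using grid_acyclic_subset[OF generator_subset_stage[OF _ assms(3)]] assms(4)
    unfolding P_prop_def grid_tree_def by blast
  with assms(4) have "P_prop G"
    using P_prop_msum_factor[OF g(3) g(2) spanning G] i by simp
  then show ?thesis
    using P_prop_msum[OF _ g(2) spanning assms(4) G] g by simp
qed

end
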